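(* Let $p\in{\cal H}_R$ be a primitive element such that $\pi_c(p)=0$. Then $p=0$.
   Context: A rooted tree is a finite connected and simply connected graph with a distinguished vertex (the root), edges oriented away from the root. ${\cal H}_R$ is the commutative polynomial algebra over $\mathbb{Q}$ on isomorphism classes of rooted trees; its monomials (forests) form a basis, $1$ being the empty forest. An admissible cut $C$ of a tree $t$ is a nonempty set of edges such that every path from the root to a vertex contains at most one edge of $C$; removing them gives a forest in which $R^C(t)$ is the tree containing the root and $P^C(t)$ the product of the others. The coproduct is the algebra morphism $\Delta$ with $\Delta(t)=1\otimes t+t\otimes1+\sum_CP^C(t)\otimes R^C(t)$ on trees; $p$ is primitive iff $\Delta(p)=p\otimes1+1\otimes p$. $\pi_c$ is the linear projection of ${\cal H}_R$ onto the span of rooted trees which vanishes on every forest that is not a single tree (including the empty forest). *)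

theory Defs
  imports Complex_Main "HOL-Library.Multiset"
begin

text \<open>Isomorphism classes of rooted trees: a tree is a root together with the
  (unordered) multiset of subtrees hanging below its children.\<close>
datatype tree = Node "tree multiset"

text \<open>Forests = monomials of the polynomial algebra H_R; the empty forest is 1.\<close>
type_synonym forest = "tree multiset"

definition mcomb :: "('a multiset \<times> 'b multiset) multiset \<Rightarrow> ('a multiset \<times> 'b multiset) multiset
                     \<Rightarrow> ('a multiset \<times> 'b multiset) multiset" where
  "mcomb A B = (\<Sum>x\<in>#A. image_mset (\<lambda>y. (fst x + fst y, snd x + snd y)) B)"

definition mcomb_all :: "('a multiset \<times> 'b multiset) multiset multiset \<Rightarrow> ('a multiset \<times> 'b multiset) multiset" where
  "mcomb_all M = fold_mset mcomb {#({#}, {#})#} M"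

text \<open>cuts t: the multiset, over all admissible cuts C of t together with the empty
  cut, of the pairs (P^C(t), R^C(t)); the empty cut contributes (1, t).
  A cut of the tree with root subtrees F is obtained by choosing independently,
  for each edge from the root to a child subtree c, either to cut this edge
  (c goes entirely into P) or not to cut it and then choosing a (possibly empty)
  cut of c (so that every root-to-vertex path has at most one cut edge).\<close>
primrec cuts :: "tree \<Rightarrow> (forest \<times> tree) multiset" where
  "cuts (Node F) =
     image_mset (\<lambda>(P, Rs). (P, Node Rs))
       (mcomb_all (image_mset (\<lambda>c. {#({#c#}, {#})#} + image_mset (\<lambda>(P, R). (P, {#R#})) (cuts c)) F))"

text \<open>Coproduct of a tree as a multiset of basis tensors P (x) R:
  Delta(t) = t (x) 1 + 1 (x) t + sum over nonempty admissible cuts.\<close>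
definition coprod_tree :: "tree \<Rightarrow> (forest \<times> forest) multiset" where
  "coprod_tree t = {#({#t#}, {#})#} + image_mset (\<lambda>(P, R). (P, {#R#})) (cuts t)"

definition coprod_forest :: "forest \<Rightarrow> (forest \<times> forest) multiset" where
  "coprod_forest F = mcomb_all (image_mset coprod_tree F)"

text \<open>Elements of H_R: finitely supported coefficient functions on forests.
  Elements of H_R (x) H_R: coefficient functions on pairs of forests.\<close>
definition in_HR :: "(forest \<Rightarrow> rat) \<Rightarrow> bool" where
  "in_HR p \<longleftrightarrow> finite {F. p F \<noteq> 0}"

definition coprod :: "(forest \<Rightarrow> rat) \<Rightarrow> (forest \<times> forest \<Rightarrow> rat)" where
  "coprod p = (\<lambda>ab. \<Sum>F\<in>{F. p F \<noteq> 0}. p F * of_nat (count (coprod_forest F) ab))"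

definition prim_tensor :: "(forest \<Rightarrow> rat) \<Rightarrow> (forest \<times> forest \<Rightarrow> rat)" where
  "prim_tensor p = (\<lambda>(a, b). (if b = {#} then p a else 0) + (if a = {#} then p b else 0))"

definition primitive :: "(forest \<Rightarrow> rat) \<Rightarrow> bool" where
  "primitive p \<longleftrightarrow> coprod p = prim_tensor p"

definition pi_c :: "(forest \<Rightarrow> rat) \<Rightarrow> (forest \<Rightarrow> rat)" where
  "pi_c p = (\<lambda>F. if size F = 1 then p F else 0)"

end

theory Submission
  imports Defs "HOL-Library.Product_Plus"
begin

text \<open>Every basis tensor \<open>a \<otimes> b\<close> occurring in \<open>\<Delta>(F)\<close> has at least as many trees as \<open>F\<close>,
  with equality only if no edge is cut, i.e. \<open>a b = F\<close>: each tree either goes whole to one side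
  or leaves its root part on the right and a nonempty forest on the left. Now let \<open>F\<close> be a forest
  of least size in the support of \<open>p\<close>. If \<open>F = t F'\<close> with \<open>F' \<noteq> 1\<close>, the coefficient of
  \<open>F' \<otimes> t\<close> in \<open>\<Delta>(p)\<close> receives a contribution from \<open>F\<close> alone, so it is a positive multiple
  of \<open>p(F)\<close>, whereas in \<open>p \<otimes> 1 + 1 \<otimes> p\<close> it is zero. So \<open>p\<close> is supported on forests with
  at most one tree; the empty forest is excluded by the coefficient of \<open>1 \<otimes> 1\<close>, single trees
  by \<open>\<pi>\<^sub>c(p) = 0\<close>.\<close>

lemma mcomb_eq_sum: "mcomb A B = (\<Sum>x\<in>#A. image_mset ((+) x) B)"
  unfolding mcomb_def plus_prod_def ..

lemma mcomb_empty_left [simp]: "mcomb {#} B = {#}"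
  by (simp add: mcomb_eq_sum)

lemma mcomb_add_mset_left [simp]: "mcomb (add_mset x A) B = image_mset ((+) x) B + mcomb A B"
  by (simp add: mcomb_eq_sum)

lemma mcomb_union_left: "mcomb (A + A') B = mcomb A B + mcomb A' B"
  by (simp add: mcomb_eq_sum)

lemma mcomb_empty_right [simp]: "mcomb A {#} = {#}"
  by (induction A) simp_all

lemma mcomb_add_mset_right: "mcomb A (add_mset y B) = image_mset (\<lambda>x. x + y) A + mcomb A B"
  by (induction A) (simp_all add: add.commute)

lemma mcomb_commute: "mcomb A B = mcomb B A"
  by (induction A) (simp_all add: mcomb_add_mset_right add.commute)

lemma mcomb_image_add_left: "mcomb (image_mset ((+) x) B) C = image_mset ((+) x) (mcomb B C)"
  by (induction B) (simp_all add: multiset.map_comp comp_def add.assoc[symmetric])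

lemma mcomb_assoc: "mcomb (mcomb A B) C = mcomb A (mcomb B C)"
  by (induction A) (simp_all add: mcomb_union_left mcomb_image_add_left)

lemma comp_fun_commute_mcomb: "comp_fun_commute mcomb"
proof
  fix A B :: "('a multiset \<times> 'b multiset) multiset"
  have "mcomb B (mcomb A C) = mcomb A (mcomb B C)" for C
    by (simp only: mcomb_assoc[symmetric] mcomb_commute[of A B])
  then show "mcomb B \<circ> mcomb A = mcomb A \<circ> mcomb B"
    by (simp add: fun_eq_iff)
qed

lemma mcomb_all_empty [simp]: "mcomb_all {#} = {#0#}"
  by (simp add: mcomb_all_def zero_prod_def)

lemma mcomb_all_add_mset [simp]: "mcomb_all (add_mset A M) = mcomb A (mcomb_all M)"
  unfolding mcomb_all_def by (rule comp_fun_commute.fold_mset_add_mset[OF comp_fun_commute_mcomb])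

lemma mem_mcomb_iff: "z \<in># mcomb A B \<longleftrightarrow> (\<exists>x\<in>#A. \<exists>y\<in>#B. z = x + y)"
  by (induction A) auto

lemma sum_mem_mcomb_all_image:
  "(\<And>c. c \<in># M \<Longrightarrow> g c \<in># h c) \<Longrightarrow> (\<Sum>c\<in>#M. g c) \<in># mcomb_all (image_mset h M)"
  by (induction M) (auto simp: mem_mcomb_iff)

lemma mcomb_all_image_induct [consumes 1, case_names empty add_mset]:
  assumes "x \<in># mcomb_all (image_mset h M)"
    and "P {#} 0"
    and "\<And>c N y z. c \<in># M \<Longrightarrow> y \<in># h c \<Longrightarrow> P N z \<Longrightarrow> P (add_mset c N) (y + z)"
  shows "P M x"
proof -
  have "P N x" if "N \<subseteq># M" and "x \<in># mcomb_all (image_mset h N)" for N x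
    using that
  proof (induction N arbitrary: x)
    case empty
    then show ?case using assms(2) by simp
  next
    case (add c N)
    from add.prems(2) obtain y z
      where y: "y \<in># h c" and z: "z \<in># mcomb_all (image_mset h N)" and x: "x = y + z"
      by (auto simp: mem_mcomb_iff)
    have "c \<in># M" "N \<subseteq># M"
      using add.prems(1) by (auto dest: mset_subset_eq_insertD)
    with add.IH y z show ?case
      unfolding x by (intro assms(3))
  qed
  from this[OF subset_mset.order_refl assms(1)] show ?thesis .
qed

definition branch_cuts :: "tree \<Rightarrow> (forest \<times> forest) multiset" where
  "branch_cuts c = {#({#c#}, {#})#} + image_mset (\<lambda>(P, R). (P, {#R#})) (cuts c)"

lemma cuts_Node:
  "cuts (Node F) = image_mset (\<lambda>(P, Rs). (P, Node Rs)) (mcomb_all (image_mset branch_cuts F))"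
  by (simp only: cuts.simps branch_cuts_def[abs_def])

lemma empty_mem_cuts: "({#}, t) \<in># cuts t"
proof (induction t)
  case (Node F)
  have "({#}, {#c#}) \<in># branch_cuts c" if "c \<in># F" for c
    unfolding branch_cuts_def by (simp add: rev_image_eqI[OF Node.IH[OF that]])
  then have "(\<Sum>c\<in>#F. ({#}, {#c#})) \<in># mcomb_all (image_mset branch_cuts F)"
    by (rule sum_mem_mcomb_all_image)
  moreover have "(\<Sum>c\<in>#F. ({#}::forest, {#c#})) = ({#}, F)"
    by (induction F) (simp_all add: zero_prod_def)
  ultimately have "({#}, F) \<in># mcomb_all (image_mset branch_cuts F)"
    by simp
  then show ?case
    unfolding cuts_Node set_image_mset by (rule rev_image_eqI) simp
qed

lemma cuts_empty_left: "(P, R) \<in># cuts t \<Longrightarrow> P = {#} \<Longrightarrow> R = t"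
proof (induction t arbitrary: P R)
  case (Node F)
  have "fst x = {#} \<longrightarrow> snd x = F" if "x \<in># mcomb_all (image_mset branch_cuts F)" for x
    using that
  proof (induction rule: mcomb_all_image_induct)
    case empty
    then show ?case by simp
  next
    case (add_mset c N y z)
    show ?case
    proof
      assume "fst (y + z) = {#}"
      then have "fst y = {#}" "fst z = {#}" by simp_all
      with \<open>y \<in># branch_cuts c\<close> obtain R where R: "({#}, R) \<in># cuts c" "y = ({#}, {#R#})"
        by (auto simp: branch_cuts_def)
      with Node.IH[OF \<open>c \<in># F\<close> R(1)] have "y = ({#}, {#c#})" by simp
      with \<open>fst z = {#} \<longrightarrow> snd z = N\<close> \<open>fst z = {#}\<close> show "snd (y + z) = add_mset c N" by simp
    qed
  qed
  moreover from Node.prems(1) obtain Rs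
    where "(P, Rs) \<in># mcomb_all (image_mset branch_cuts F)" and "R = Node Rs"
    unfolding cuts_Node by auto
  ultimately show ?case
    using Node.prems(2) by force
qed

lemma coprod_tree_cases:
  assumes "(a, b) \<in># coprod_tree t"
  shows "a + b = {#t#} \<or> 2 \<le> size a + size b"
proof -
  consider "(a, b) = ({#t#}, {#})" | R where "(a, R) \<in># cuts t" "b = {#R#}"
    using assms by (auto simp: coprod_tree_def)
  then show ?thesis
  proof cases
    case (2 R)
    show ?thesis
    proof (cases "a = {#}")
      case True
      with 2 cuts_empty_left[of a R t] show ?thesis by simp
    next
      case False
      then have "1 \<le> size a" by (simp add: Suc_le_eq nonempty_has_size)
      with 2 show ?thesis by simp
    qed
  qed simp
qed

lemma coprod_forest_empty [simp]: "coprod_forest {#} = {#0#}"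
  by (simp add: coprod_forest_def)

lemma coprod_forest_add_mset [simp]:
  "coprod_forest (add_mset t G) = mcomb (coprod_tree t) (coprod_forest G)"
  by (simp add: coprod_forest_def)

lemma coprod_forest_cases:
  "(a, b) \<in># coprod_forest G \<Longrightarrow> a + b = G \<or> size G < size a + size b"
proof (induction G arbitrary: a b)
  case empty
  then show ?case by (simp add: zero_prod_def)
next
  case (add t G)
  from add.prems obtain a1 b1 a2 b2
    where 1: "(a1, b1) \<in># coprod_tree t" and 2: "(a2, b2) \<in># coprod_forest G"
      and ab: "a = a1 + a2" "b = b1 + b2"
    by (auto simp: mem_mcomb_iff)
  have "a + b = (a1 + b1) + (a2 + b2)" and "size a + size b = size (a1 + b1) + size (a2 + b2)"
    by (simp_all add: ab ac_simps)
  with coprod_tree_cases[OF 1] add.IH[OF 2] show ?case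
    by (elim disjE) simp_all
qed

lemma coprod_forest_uncut: "(A, B) \<in># coprod_forest (A + B)"
proof (induction A)
  case empty
  show ?case
  proof (induction B)
    case (add t B)
    have "({#}, {#t#}) \<in># coprod_tree t"
      using empty_mem_cuts[of t] by (force simp: coprod_tree_def)
    with add show ?case by (force simp: mem_mcomb_iff)
  qed (simp add: zero_prod_def)
next
  case (add t A)
  have "({#t#}, {#}) \<in># coprod_tree t"
    by (simp add: coprod_tree_def)
  with add show ?case by (force simp: mem_mcomb_iff)
qed

lemma coprod_eq_single_term:
  assumes "in_HR p"
    and "\<And>G. p G \<noteq> 0 \<Longrightarrow> G \<noteq> F \<Longrightarrow> ab \<notin># coprod_forest G"
  shows "coprod p ab = p F * of_nat (count (coprod_forest F) ab)"
proof -
  have "coprod p ab = (\<Sum>G\<in>{G. p G \<noteq> 0}. if G = F then p F * of_nat (count (coprod_forest F) ab) else 0)"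
    unfolding coprod_def by (rule sum.cong) (auto simp: assms(2) count_eq_zero_iff)
  also have "\<dots> = p F * of_nat (count (coprod_forest F) ab)"
    using assms(1) by (simp add: in_HR_def sum.delta)
  finally show ?thesis .
qed

lemma primitive_vanishes_on_empty:
  assumes "in_HR p" and "primitive p"
  shows "p {#} = 0"
proof -
  have "coprod p ({#}, {#}) = p {#}"
    using coprod_eq_single_term[OF assms(1), of "{#}"] coprod_forest_cases[of "{#}" "{#}"]
    by (force simp: zero_prod_def)
  moreover have "prim_tensor p ({#}, {#}) = 2 * p {#}"
    by (simp add: prim_tensor_def)
  ultimately show ?thesis
    using assms(2) by (simp add: primitive_def)
qed

lemma primitive_least_support_size:
  assumes "in_HR p" and "primitive p" and "p F \<noteq> 0"
    and least: "\<And>G. p G \<noteq> 0 \<Longrightarrow> size F \<le> size G"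
  shows "size F \<le> 1"
proof (rule ccontr)
  assume "\<not> size F \<le> 1"
  then obtain t F' where F: "F = add_mset t F'" and "F' \<noteq> {#}"
    by (metis One_nat_def le_SucI le_refl multiset_cases size_empty size_single)
  have "coprod p (F', {#t#}) = p F * of_nat (count (coprod_forest F) (F', {#t#}))"
  proof (rule coprod_eq_single_term[OF assms(1)])
    fix G assume "p G \<noteq> 0" "G \<noteq> F"
    then show "(F', {#t#}) \<notin># coprod_forest G"
      using coprod_forest_cases[of F' "{#t#}" G] least[of G] F by auto
  qed
  moreover have "(F', {#t#}) \<in># coprod_forest F"
    using coprod_forest_uncut[of F' "{#t#}"] F by simp
  ultimately have "coprod p (F', {#t#}) \<noteq> 0"
    using assms(3) by simp
  moreover have "prim_tensor p (F', {#t#}) = 0"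
    using \<open>F' \<noteq> {#}\<close> by (simp add: prim_tensor_def)
  ultimately show False
    using assms(2) by (simp add: primitive_def)
qed

theorem lemma9p4:
  fixes p :: "forest \<Rightarrow> rat"
  assumes "in_HR p"
    and "primitive p"
    and "pi_c p = (\<lambda>_. 0)"
  shows "p = (\<lambda>_. 0)"
proof (rule ccontr)
  assume "p \<noteq> (\<lambda>_. 0)"
  then obtain F where "p F \<noteq> 0" and least: "\<And>G. p G \<noteq> 0 \<Longrightarrow> size F \<le> size G"
    using ex_has_least_nat[of "\<lambda>F. p F \<noteq> 0" _ size] by blast
  have "size F \<le> 1"
    using primitive_least_support_size[OF assms(1,2) \<open>p F \<noteq> 0\<close> least] .
  moreover have "size F \<noteq> 0"
    using \<open>p F \<noteq> 0\<close> primitive_vanishes_on_empty[OF assms(1,2)] by auto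
  moreover have "size F \<noteq> 1"
    using fun_cong[OF assms(3), of F] \<open>p F \<noteq> 0\<close> by (auto simp: pi_c_def)
  ultimately show False by linarith
qed

end
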